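(* Let $a$ be a point of $AG(4,3)$ and let $D$ be a cap which is the union of five pairwise disjoint $a$-lines (so $|D|=10$ and $a\notin D$). Then $D$ is a demicap with anchor point $a$ if and only if for every point $b\notin D\cup\{a\}$, the set $D\cup\{b\}$ contains at most one line.
   Context: $AG(4,3)$ is the affine space $\mathbb{F}_3^4$; a line is a set of three distinct points $\{x,y,z\}$ with $x+y+z=0$. A cap is a set of points containing no line. A hyperplane is a $3$-dimensional affine subspace of $\mathbb{F}_3^4$; a set of points is co-hyperplanar if it lies in a common hyperplane. For a point $a$, an $a$-line is a pair of points $\{b,c\}$ such that $\{a,b,c\}$ is a line. A demicap with anchor point $a$ is a cap consisting of the $10$ points of five $a$-lines such that no four of these five $a$-lines are co-hyperplanar (i.e. the $8$ points of any four of them do not lie in a common hyperplane). *)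

theory Defs
  imports "HOL-Analysis.Finite_Cartesian_Product" "HOL-Library.Numeral_Type"
begin

text \<open>Points of AG(4,3) are vectors in F_3^4, modelled as the type 3 ^ 4
  (type 3 is the ring Z/3Z = F_3).\<close>
type_synonym pt = "3 ^ 4"

definition is_line :: "pt set \<Rightarrow> bool" where
  "is_line L \<longleftrightarrow> (\<exists>x y z. L = {x, y, z} \<and> x \<noteq> y \<and> x \<noteq> z \<and> y \<noteq> z \<and> x + y + z = 0)"

definition is_cap :: "pt set \<Rightarrow> bool" where
  "is_cap C \<longleftrightarrow> \<not> (\<exists>L. is_line L \<and> L \<subseteq> C)"

text \<open>A linear subspace of F_3^4 (closed under 0, addition, scalar multiplication).
  Its dimension over F_3 is 3 iff it has 3^3 elements.\<close>
definition is_subspace :: "pt set \<Rightarrow> bool" where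
  "is_subspace V \<longleftrightarrow> 0 \<in> V \<and> (\<forall>x\<in>V. \<forall>y\<in>V. x + y \<in> V) \<and> (\<forall>c::3. \<forall>x\<in>V. c *s x \<in> V)"

definition is_hyperplane :: "pt set \<Rightarrow> bool" where
  "is_hyperplane H \<longleftrightarrow> (\<exists>p V. is_subspace V \<and> card V = 3 ^ 3 \<and> H = (\<lambda>v. p + v) ` V)"

definition cohyperplanar :: "pt set \<Rightarrow> bool" where
  "cohyperplanar S \<longleftrightarrow> (\<exists>H. is_hyperplane H \<and> S \<subseteq> H)"

definition is_aline :: "pt \<Rightarrow> pt set \<Rightarrow> bool" where
  "is_aline a l \<longleftrightarrow> (\<exists>b c. l = {b, c} \<and> is_line {a, b, c})"

definition is_demicap :: "pt \<Rightarrow> pt set \<Rightarrow> bool" where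
  "is_demicap a D \<longleftrightarrow> is_cap D \<and>
     (\<exists>P. card P = 5 \<and> (\<forall>l\<in>P. is_aline a l) \<and> \<Union>P = D \<and>
          (\<forall>Q. Q \<subseteq> P \<and> card Q = 4 \<longrightarrow> \<not> cohyperplanar (\<Union>Q)))"

end

theory Submission
  imports Defs
begin

(* Translate by -a. Since 3a = 0, the points of D become the directions +/-u_1, ..., +/-u_5 of
   its a-lines, and a line inside D becomes three directions with zero sum; so in the cap D no
   signed sum of at most three directions of distinct a-lines vanishes. Both conditions of the
   theorem say that the same holds for four directions. If +/-u_i +/-u_j +/-u_k +/-u_l = 0, the
   four a-lines lie in the hyperplane a + span {u_i, u_j, u_k}, and b = a - (u_i + u_j) lies on
   the two lines {b, a + u_i, a + u_j} and {b, a - u_k, a - u_l}. Conversely, the directions of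
   four a-lines in a hyperplane lie in a 3-dimensional subspace, so a nontrivial F_3-combination
   of them vanishes; and two lines {b, a + x, a + y}, {b, a + z, a + w} through b give
   x + y = z + w. *)

lemma three_eq_zero: "(3::3) = 0"
  by simp

lemma three_times_eq_0: "3 * x = (0::3^'n)"
  by (simp add: vec_eq_iff three_eq_zero)

lemma add_self_eq_minus: "x + x = - (x::3^'n)"
  using three_times_eq_0[of x] by (simp add: eq_neg_iff_add_eq_0)

lemma two_times_eq_minus: "2 * x = - (x::3^'n)"
  by (metis add_self_eq_minus mult_2)

lemma two_times_eq_0_iff: "2 * x = 0 \<longleftrightarrow> x = (0::3^'n)"
  by (simp add: two_times_eq_minus)

lemma minus_eq_self_iff: "- x = x \<longleftrightarrow> x = (0::3^'n)"
proof
  assume "- x = x"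
  then have "x + x = x" using add_self_eq_minus[of x] by simp
  then show "x = 0" by simp
qed simp

lemma minus_add_eq_left_iff: "- (x + y) = x \<longleftrightarrow> y = (x::3^'n)"
proof -
  have "- (x + y) = x \<longleftrightarrow> x + x + y = 0"
    by (metis add.commute add.left_commute eq_neg_iff_add_eq_0)
  also have "\<dots> \<longleftrightarrow> y = x"
    by (simp add: add_self_eq_minus eq_neg_iff_add_eq_0 add.commute)
  finally show ?thesis .
qed

lemma F3_cases: "(c::3) = 0 \<or> c = 1 \<or> c = -1"
proof (cases c)
  case (of_int z)
  then have "z = 0 \<or> z = 1 \<or> z = 2" by auto
  then show ?thesis using of_int three_eq_zero by (auto simp: eq_neg_iff_add_eq_0)
qed

lemma scale_F3_cases: "(c::3) \<noteq> 0 \<Longrightarrow> c *s x = x \<or> c *s x = - x"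
  using F3_cases[of c] by (auto simp: vector_sneg_minus1)

lemma is_line_iff: "is_line {x, y, z} \<longleftrightarrow> x \<noteq> y \<and> x \<noteq> z \<and> y \<noteq> z \<and> x + y + z = 0"
proof
  assume "is_line {x, y, z}"
  then obtain p q r where pqr: "{x, y, z} = {p, q, r}" "p \<noteq> q" "p \<noteq> r" "q \<noteq> r" "p + q + r = 0"
    unfolding is_line_def by blast
  then have "card {x, y, z} = 3" by simp
  then have distinct: "x \<noteq> y \<and> x \<noteq> z \<and> y \<noteq> z" by (auto simp: card_insert_if split: if_splits)
  have "x + y + z = \<Sum>{x, y, z}" using distinct by (simp add: add.assoc)
  also have "\<dots> = p + q + r" using pqr by (simp add: add.assoc)
  finally show "x \<noteq> y \<and> x \<noteq> z \<and> y \<noteq> z \<and> x + y + z = 0" using distinct pqr by simp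
qed (auto simp: is_line_def)

lemma is_line_translate: "is_line {a + x, a + y, a + z} \<longleftrightarrow> is_line {x, y, z}"
proof -
  have "(a + x) + (a + y) + (a + z) = (x + y + z) + 3 * a" by (simp add: algebra_simps)
  then show ?thesis by (simp add: is_line_iff three_times_eq_0 add.assoc)
qed

lemma is_line_through:
  assumes "is_line L" "b \<in> L"
  obtains q r where "L = {b, q, r}"
proof -
  obtain p q r where "L = {p, q, r}" using assms(1) unfolding is_line_def by blast
  with assms(2) have "L = {b, q, r} \<or> L = {b, p, r} \<or> L = {b, p, q}"
    by (auto simp: insert_commute)
  then show thesis using that by blast
qed

lemma aline_iff: "is_aline a l \<longleftrightarrow> (\<exists>u. u \<noteq> 0 \<and> l = {a + u, a - u})"
proof
  assume "is_aline a l"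
  then obtain b c where l: "l = {b, c}" "is_line {a, b, c}"
    unfolding is_aline_def by blast
  then have "b \<noteq> a" "a + b + c = 0" by (auto simp: is_line_iff)
  have "c = - (a + b)"
    using \<open>a + b + c = 0\<close> by (metis add.commute eq_neg_iff_add_eq_0)
  also have "\<dots> = a - (b - a)"
    using add_self_eq_minus[of a] by (simp add: algebra_simps)
  finally show "\<exists>u. u \<noteq> 0 \<and> l = {a + u, a - u}"
    using l \<open>b \<noteq> a\<close> by (intro exI[of _ "b - a"]) auto
next
  assume "\<exists>u. u \<noteq> 0 \<and> l = {a + u, a - u}"
  then obtain u where u: "u \<noteq> 0" "l = {a + u, a - u}" by blast
  then have "is_line {a + 0, a + u, a + - u}"
    unfolding is_line_translate is_line_iff by (auto simp: two_times_eq_0_iff three_times_eq_0)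
  then show "is_aline a l" unfolding is_aline_def using u by auto
qed

lemma aline_pair_eq_iff:
  fixes a u v :: "'a::ab_group_add"
  shows "{a + u, a - u} = {a + v, a - v} \<longleftrightarrow> v = u \<or> v = - u"
  by (auto simp: doubleton_eq_iff)

lemma alines_subset_if_Union_subset:
  assumes "\<forall>l\<in>P1. is_aline a l" "\<forall>l\<in>P2. is_aline a l" "\<Union>P1 \<subseteq> \<Union>P2"
  shows "P1 \<subseteq> P2"
proof
  fix l assume "l \<in> P1"
  then obtain u where u: "l = {a + u, a - u}" using assms(1) aline_iff by blast
  with \<open>l \<in> P1\<close> assms(3) obtain m where m: "m \<in> P2" "a + u \<in> m" by blast
  then obtain v where v: "m = {a + v, a - v}" using assms(2) aline_iff by blast
  with m(2) have "v = u \<or> v = - u" by auto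
  then have "m = l" using u v aline_pair_eq_iff by blast
  then show "l \<in> P2" using m by simp
qed

lemma subspace_minus: "is_subspace V \<Longrightarrow> x \<in> V \<Longrightarrow> - x \<in> V"
proof -
  assume "is_subspace V" "x \<in> V"
  then have "(-1) *s x \<in> V" unfolding is_subspace_def by blast
  then show "- x \<in> V" by (simp add: vector_sneg_minus1)
qed

lemma subspace_diff: "is_subspace V \<Longrightarrow> x \<in> V \<Longrightarrow> y \<in> V \<Longrightarrow> x - y \<in> V"
  using subspace_minus[of V y] unfolding is_subspace_def diff_conv_add_uminus by blast

lemma subspace_sum:
  assumes "is_subspace V" "\<And>x. x \<in> S \<Longrightarrow> f x \<in> V"
  shows "sum f S \<in> V"
  using assms(2)
proof (induction S rule: infinite_finite_induct)
  case (insert x S)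
  then show ?case using assms(1) unfolding is_subspace_def by simp
qed (use assms(1) in \<open>simp_all add: is_subspace_def\<close>)

lemma aline_subset_translate:
  assumes "is_subspace V" "u \<in> V"
  shows "{a + u, a - u} \<subseteq> (\<lambda>v. a + v) ` V"
proof -
  have "a + u \<in> (\<lambda>v. a + v) ` V" "a + - u \<in> (\<lambda>v. a + v) ` V"
    using assms(2) subspace_minus[OF assms] by blast+
  then show ?thesis by simp
qed

lemma direction_in_subspace:
  assumes "is_subspace V" "a + u \<in> (\<lambda>v. p + v) ` V" "a - u \<in> (\<lambda>v. p + v) ` V"
  shows "u \<in> V"
proof -
  obtain v1 v2 where v: "v1 \<in> V" "v2 \<in> V" "a + u = p + v1" "a - u = p + v2"
    using assms(2,3) by blast
  have "v2 - v1 = - (u + u)" using v(3,4) by (simp add: algebra_simps)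
  also have "\<dots> = u" by (simp add: add_self_eq_minus)
  finally show ?thesis using subspace_diff[OF assms(1) v(2,1)] by simp
qed

(* The numeral type 3 is a ring but not a field instance, so the little linear algebra over
   F_3 needed here is done by hand. *)
definition f3_span :: "(3^'n) set \<Rightarrow> (3^'n) set" where
  "f3_span S = range (\<lambda>c. \<Sum>x\<in>S. c x *s x)"

definition f3_independent :: "(3^'n) set \<Rightarrow> bool" where
  "f3_independent S \<longleftrightarrow> (\<forall>c. (\<Sum>x\<in>S. c x *s x) = 0 \<longrightarrow> (\<forall>x\<in>S. c x = 0))"

lemma mem_f3_span_iff: "v \<in> f3_span S \<longleftrightarrow> (\<exists>c. v = (\<Sum>x\<in>S. c x *s x))"
  unfolding f3_span_def by blast

lemma f3_independentD:
  "f3_independent S \<Longrightarrow> (\<Sum>x\<in>S. c x *s x) = 0 \<Longrightarrow> x \<in> S \<Longrightarrow> c x = 0"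
  unfolding f3_independent_def by blast

lemma scale_sum: "(c::'a::semiring_0) *s sum f S = (\<Sum>x\<in>S. c *s f x)"
  by (simp add: vec_eq_iff sum_distrib_left)

lemma f3_span_subspace: "is_subspace (f3_span S)"
  unfolding is_subspace_def f3_span_def
proof (intro conjI ballI allI)
  show "0 \<in> range (\<lambda>c. \<Sum>x\<in>S. c x *s x)"
    by (rule range_eqI[of _ _ "\<lambda>_. 0"]) simp
next
  fix u v assume "u \<in> range (\<lambda>c. \<Sum>x\<in>S. c x *s x)" "v \<in> range (\<lambda>c. \<Sum>x\<in>S. c x *s x)"
  then obtain c d where "u = (\<Sum>x\<in>S. c x *s x)" "v = (\<Sum>x\<in>S. d x *s x)" by auto
  then have "u + v = (\<Sum>x\<in>S. (c x + d x) *s x)"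
    by (simp add: vector_sadd_rdistrib sum.distrib)
  then show "u + v \<in> range (\<lambda>c. \<Sum>x\<in>S. c x *s x)" by auto
next
  fix k u assume "u \<in> range (\<lambda>c. \<Sum>x\<in>S. c x *s x)"
  then obtain c where "u = (\<Sum>x\<in>S. c x *s x)" by auto
  then have "k *s u = (\<Sum>x\<in>S. (k * c x) *s x)"
    by (simp add: scale_sum vector_smult_assoc)
  then show "k *s u \<in> range (\<lambda>c. \<Sum>x\<in>S. c x *s x)" by auto
qed

lemma f3_span_superset: "finite S \<Longrightarrow> S \<subseteq> f3_span S"
proof
  fix x assume "finite S" "x \<in> S"
  then have "x = (\<Sum>y\<in>S. if y = x then x else 0)"
    by (simp add: sum.delta)
  also have "\<dots> = (\<Sum>y\<in>S. (if y = x then 1 else 0) *s y)"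
    by (rule sum.cong) auto
  finally show "x \<in> f3_span S"
    unfolding mem_f3_span_iff by (rule exI[where x = "\<lambda>y. if y = x then 1 else 0"])
qed

lemma f3_span_subset:
  assumes "is_subspace V" "S \<subseteq> V"
  shows "f3_span S \<subseteq> V"
proof
  fix v assume "v \<in> f3_span S"
  then obtain c where v: "v = (\<Sum>x\<in>S. c x *s x)" unfolding mem_f3_span_iff by blast
  have "c x *s x \<in> V" if "x \<in> S" for x
    using assms that unfolding is_subspace_def by blast
  then show "v \<in> V" unfolding v by (rule subspace_sum[OF assms(1)])
qed

lemma card_f3_span:
  assumes "finite S" "f3_independent S"
  shows "card (f3_span S) = 3 ^ card S"
proof -
  let ?comb = "\<lambda>c. \<Sum>x\<in>S. c x *s x"
  have "f3_span S = ?comb ` (S \<rightarrow>\<^sub>E UNIV)"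
  proof (rule antisym)
    show "f3_span S \<subseteq> ?comb ` (S \<rightarrow>\<^sub>E UNIV)"
    proof
      fix v assume "v \<in> f3_span S"
      then obtain c where "v = ?comb c" unfolding f3_span_def by auto
      also have "\<dots> = ?comb (restrict c S)" by (intro sum.cong) auto
      finally show "v \<in> ?comb ` (S \<rightarrow>\<^sub>E UNIV)"
        by (auto intro!: image_eqI[where x = "restrict c S"])
    qed
  qed (auto simp: f3_span_def)
  moreover have "inj_on ?comb (S \<rightarrow>\<^sub>E UNIV)"
  proof (rule inj_onI)
    fix c d assume cd: "c \<in> S \<rightarrow>\<^sub>E UNIV" "d \<in> S \<rightarrow>\<^sub>E UNIV" "?comb c = ?comb d"
    have "(\<Sum>x\<in>S. (c x - d x) *s x) = ?comb c - ?comb d"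
      by (simp add: vector_sub_rdistrib sum_subtractf)
    with cd(3) have "c x - d x = 0" if "x \<in> S" for x
      using f3_independentD[OF assms(2), where c = "\<lambda>x. c x - d x"] that by simp
    then show "c = d" using cd(1,2) by (intro PiE_ext) auto
  qed
  ultimately have "card (f3_span S) = card (S \<rightarrow>\<^sub>E (UNIV :: 3 set))"
    by (simp add: card_image)
  also have "\<dots> = 3 ^ card S"
    using assms(1) by (simp add: card_PiE)
  finally show ?thesis .
qed

definition antipodal_free :: "'a::group_add set \<Rightarrow> bool" where
  "antipodal_free S \<longleftrightarrow> (\<forall>x\<in>S. - x \<notin> S)"

definition zero_sum_free :: "nat \<Rightarrow> 'a::ab_group_add set \<Rightarrow> bool" where
  "zero_sum_free k U \<longleftrightarrow>
     (\<forall>S\<subseteq>U. finite S \<and> S \<noteq> {} \<and> card S \<le> k \<and> antipodal_free S \<longrightarrow> \<Sum>S \<noteq> 0)"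

lemma antipodal_free_4_iff:
  fixes x y z w :: "'a::group_add"
  shows "antipodal_free {x, y, z, w} \<and> distinct [x, y, z, w] \<longleftrightarrow> distinct [x, y, z, w, -x, -y, -z, -w]"
  by (auto simp: antipodal_free_def)

lemma card_4E:
  assumes "card S = 4"
  obtains x y z w where "S = {x, y, z, w}" "distinct [x, y, z, w]"
proof -
  from assms have "card S = Suc 3" by simp
  then have "\<exists>x S'. S = insert x S' \<and> x \<notin> S' \<and> card S' = 3 \<and> ((3::nat) = 0 \<longrightarrow> S' = {})"
    by (rule card_eq_SucD)
  then obtain x S' where "S = insert x S'" "x \<notin> S'" "card S' = 3" by blast
  then show thesis using that by (auto simp: card_3_iff)
qed

lemma signed_image_antipodal_free:
  fixes S :: "(3^'n) set"
  assumes S: "antipodal_free S" and J: "J \<subseteq> S" "\<And>x. x \<in> J \<Longrightarrow> c x \<noteq> 0"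
  shows "inj_on (\<lambda>x. c x *s x) J" "antipodal_free ((\<lambda>x. c x *s x) ` J)"
proof -
  have sign: "c x *s x = x \<or> c x *s x = - x" if "x \<in> J" for x
    using that J(2) scale_F3_cases by blast
  have antipodal: "- x \<notin> S" if "x \<in> S" for x
    using that S unfolding antipodal_free_def by blast
  have same: "x = y" if "x \<in> J" "y \<in> J" "c x *s x = c y *s y \<or> c x *s x = - (c y *s y)" for x y
  proof -
    have "y = x \<or> y = - x"
      using that sign[of x] sign[of y] by (auto simp: minus_equation_iff)
    then show ?thesis using antipodal that J(1) by blast
  qed
  show "inj_on (\<lambda>x. c x *s x) J"
    by (rule inj_onI) (use same in blast)
  show "antipodal_free ((\<lambda>x. c x *s x) ` J)"
    unfolding antipodal_free_def
  proof (clarify)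
    fix x y assume xy: "x \<in> J" "y \<in> J" "- (c x *s x) = c y *s y"
    moreover have "c x *s x = - (c y *s y)" using xy(3) by (metis minus_minus)
    ultimately have "x = y" using same by blast
    with xy(3) have "c x *s x = 0" by (simp add: minus_eq_self_iff)
    then show False using sign[of x] antipodal[of x] xy(1) J(1) by auto
  qed
qed

lemma zero_sum_free_f3_independent:
  fixes U S :: "(3^'n) set"
  assumes U_symmetric: "\<And>u. u \<in> U \<Longrightarrow> - u \<in> U" and zsf: "zero_sum_free k U"
    and S: "S \<subseteq> U" "finite S" "card S \<le> k" "antipodal_free S"
  shows "f3_independent S"
  unfolding f3_independent_def
proof (intro allI impI)
  fix c assume comb_0: "(\<Sum>x\<in>S. c x *s x) = 0"
  define J where "J = {x\<in>S. c x \<noteq> 0}"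
  define T where "T = (\<lambda>x. c x *s x) ` J"
  have J: "J \<subseteq> S" "finite J" using S(2) unfolding J_def by auto
  note signed = signed_image_antipodal_free[OF S(4) J(1), of c]
  have "\<Sum>T = (\<Sum>x\<in>J. c x *s x)"
    unfolding T_def using signed(1) by (simp add: J_def sum.reindex)
  also have "\<dots> = (\<Sum>x\<in>S. c x *s x)"
    using S(2) by (intro sum.mono_neutral_left) (auto simp: J_def)
  finally have "\<Sum>T = 0" using comb_0 by simp
  moreover have "T \<subseteq> U"
  proof
    fix t assume "t \<in> T"
    then obtain x where "x \<in> J" "t = c x *s x" unfolding T_def by blast
    then show "t \<in> U"
      using scale_F3_cases[of "c x" x] J(1) S(1) U_symmetric[of x] unfolding J_def by auto
  qed
  moreover have "antipodal_free T" unfolding T_def using signed(2) by (simp add: J_def)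
  moreover have "card T \<le> k"
    using card_image_le[OF J(2), of "\<lambda>x. c x *s x"] card_mono[OF S(2) J(1)] S(3)
    unfolding T_def by linarith
  moreover have "finite T" using J(2) unfolding T_def by blast
  ultimately have "T = {}" using zsf unfolding zero_sum_free_def by blast
  then show "\<forall>x\<in>S. c x = 0" unfolding T_def J_def by blast
qed

locale aline_union =
  fixes a :: pt and P :: "pt set set" and D :: "pt set"
  assumes alines: "\<forall>l\<in>P. is_aline a l"
    and D_eq: "D = \<Union>P"
    and cap: "is_cap D"
begin

definition directions :: "pt set" where
  "directions = {u. a + u \<in> D}"

lemma aline_directionE:
  assumes "l \<in> P"
  obtains u where "u \<in> directions" "u \<noteq> 0" "l = {a + u, a - u}"
proof -
  obtain u where "u \<noteq> 0" "l = {a + u, a - u}" using assms alines aline_iff by blast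
  then show thesis using that assms D_eq unfolding directions_def by blast
qed

lemma aline_in_P: "u \<in> directions \<Longrightarrow> {a + u, a - u} \<in> P"
proof -
  assume "u \<in> directions"
  then obtain l where l: "l \<in> P" "a + u \<in> l" using D_eq unfolding directions_def by blast
  obtain v where v: "l = {a + v, a - v}" using aline_directionE[OF l(1)] by blast
  with l(2) have "u = v \<or> u = - v" by auto
  then show ?thesis using l(1) v aline_pair_eq_iff by metis
qed

lemma minus_in_directions: "u \<in> directions \<Longrightarrow> - u \<in> directions"
  using aline_in_P D_eq unfolding directions_def by auto

lemma zero_notin_directions: "0 \<notin> directions"
proof
  assume "0 \<in> directions"
  then obtain l where "l \<in> P" "a \<in> l" using D_eq unfolding directions_def by auto
  then show False by (elim aline_directionE) auto
qed

lemma no_zero_sum_triple: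
  assumes "x \<in> directions" "y \<in> directions" "z \<in> directions" "x \<noteq> y" "x \<noteq> z" "y \<noteq> z"
  shows "x + y + z \<noteq> 0"
proof
  assume "x + y + z = 0"
  with assms(4-6) have "is_line {a + x, a + y, a + z}"
    by (simp add: is_line_iff three_times_eq_0 add.assoc)
  moreover have "{a + x, a + y, a + z} \<subseteq> D" using assms(1-3) unfolding directions_def by simp
  ultimately show False using cap unfolding is_cap_def by blast
qed

lemma zero_sum_free_3: "zero_sum_free 3 directions"
  unfolding zero_sum_free_def
proof (intro allI impI)
  fix S assume S: "S \<subseteq> directions" "finite S \<and> S \<noteq> {} \<and> card S \<le> 3 \<and> antipodal_free S"
  then have "card S \<noteq> 0" by simp
  with S have "card S = 1 \<or> card S = 2 \<or> card S = 3" by linarith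
  then show "\<Sum>S \<noteq> 0"
  proof (elim disjE)
    assume "card S = 1"
    then obtain x where "S = {x}" by (auto simp: card_1_singleton_iff)
    then show ?thesis using S zero_notin_directions by auto
  next
    assume "card S = 2"
    then obtain x y where "S = {x, y}" "x \<noteq> y" by (auto simp: card_2_iff)
    then show ?thesis using S unfolding antipodal_free_def by (auto simp: add_eq_0_iff2)
  next
    assume "card S = 3"
    then obtain x y z where "S = {x, y, z}" "x \<noteq> y" "x \<noteq> z" "y \<noteq> z" by (auto simp: card_3_iff)
    then show ?thesis using S no_zero_sum_triple[of x y z] by (simp add: add.assoc)
  qed
qed

lemma zero_sum_quadrupleE:
  assumes "\<not> zero_sum_free 4 directions"
  obtains x y z w where "{x, y, z, w} \<subseteq> directions" "distinct [x, y, z, w, -x, -y, -z, -w]"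
    "x + y + z + w = 0"
proof -
  obtain S where S: "S \<subseteq> directions" "finite S" "S \<noteq> {}" "card S \<le> 4" "antipodal_free S" "\<Sum>S = 0"
    using assms unfolding zero_sum_free_def by blast
  have "\<not> card S \<le> 3" using zero_sum_free_3 S unfolding zero_sum_free_def by blast
  with S(4) have "card S = 4" by simp
  then obtain x y z w where "S = {x, y, z, w}" "distinct [x, y, z, w]" by (rule card_4E)
  with S that show thesis
    using antipodal_free_4_iff[of x y z w] by (simp add: add.assoc)
qed

lemma zero_sum_quadrupleI:
  assumes "{x, y, z, w} \<subseteq> directions" "distinct [x, y, z, w, -x, -y, -z, -w]" "x + y + z + w = 0"
  shows "\<not> zero_sum_free 4 directions"
proof -
  have "antipodal_free {x, y, z, w}" "card {x, y, z, w} \<le> 4" "\<Sum>{x, y, z, w} = 0"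
    using assms(2,3) antipodal_free_4_iff[of x y z w] by (simp_all add: add.assoc)
  with assms(1) show ?thesis
    unfolding zero_sum_free_def by blast
qed

lemma secant_decompose:
  assumes "b \<notin> D" "is_line L" "L \<subseteq> insert b D"
  obtains x y where "x \<in> directions" "y \<in> directions" "x \<noteq> y" "x + y = a - b" "L = {b, a + x, a + y}"
proof -
  have "b \<in> L"
    using assms(2,3) cap unfolding is_cap_def by blast
  then obtain q r where L: "L = {b, q, r}" using is_line_through[OF assms(2)] by blast
  with assms(2) have qr: "b \<noteq> q" "b \<noteq> r" "q \<noteq> r" "b + q + r = 0"
    by (simp_all add: is_line_iff)
  then have "(q - a) + (r - a) = a - b"
    using add_self_eq_minus[of a] by (simp add: algebra_simps eq_neg_iff_add_eq_0)
  moreover have "q - a \<in> directions" "r - a \<in> directions"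
    using L qr assms(3) unfolding directions_def by auto
  ultimately show thesis using that[of "q - a" "r - a"] L qr by simp
qed

lemma pair_sums_not_opposite:
  assumes dirs: "x \<in> directions" "y \<in> directions" "z \<in> directions" "w \<in> directions"
    and sums: "x + y = z + w" "x + y \<noteq> 0"
  shows "z \<noteq> - x"
proof
  assume "z = - x"
  have "w = (x + y) - z" using sums(1) by simp
  also have "\<dots> = y + (x + x)" using \<open>z = - x\<close> by (simp add: algebra_simps)
  also have "\<dots> = y - x" unfolding add_self_eq_minus by simp
  finally have "w = y - x" .
  then have "y + - x + (x - y) = 0" "x - y \<in> directions"
    using minus_in_directions[OF dirs(4)] by simp_all
  moreover have "y \<noteq> - x" using sums(2) by (auto simp: eq_neg_iff_add_eq_0 add.commute)
  moreover have "y \<noteq> x - y"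
  proof
    assume "y = x - y"
    then have "x = y + y" by (simp add: algebra_simps)
    then show False using sums(2) add_self_eq_minus[of y] by simp
  qed
  moreover have "- x \<noteq> x - y"
  proof
    assume "- x = x - y"
    then have "y = x + x" by (simp add: algebra_simps)
    then show False using sums(2) add_self_eq_minus[of x] by simp
  qed
  ultimately show False
    using no_zero_sum_triple[of y "- x" "x - y"] dirs(2) minus_in_directions[OF dirs(1)] by blast
qed

definition secants :: "pt \<Rightarrow> pt set set" where
  "secants b = {L. is_line L \<and> L \<subseteq> insert b D}"

lemma at_most_one_secant:
  assumes zsf: "zero_sum_free 4 directions" and b: "b \<notin> D" "b \<noteq> a"
  shows "card (secants b) \<le> 1"
  unfolding One_nat_def card_le_Suc0_iff_eq[OF finite]
proof (intro ballI, rule ccontr)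
  fix L1 L2 assume "L1 \<in> secants b" "L2 \<in> secants b" "L1 \<noteq> L2"
  obtain x y where xy: "x \<in> directions" "y \<in> directions" "x \<noteq> y" "x + y = a - b" "L1 = {b, a + x, a + y}"
    using secant_decompose[OF b(1)] \<open>L1 \<in> secants b\<close> unfolding secants_def by blast
  obtain z w where zw: "z \<in> directions" "w \<in> directions" "z \<noteq> w" "z + w = a - b" "L2 = {b, a + z, a + w}"
    using secant_decompose[OF b(1)] \<open>L2 \<in> secants b\<close> unfolding secants_def by blast
  have sum_nz: "x + y \<noteq> 0" "z + w \<noteq> 0" using xy(4) zw(4) b(2) by auto
  have sums: "x + y = z + w" using xy(4) zw(4) by simp
  have "{z, w} \<noteq> {x, y}"
    using xy(5) zw(5) \<open>L1 \<noteq> L2\<close> by (auto simp: doubleton_eq_iff insert_commute)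
  then have "z \<noteq> x" "w \<noteq> y" "w \<noteq> x" "z \<noteq> y"
    using sums by (auto simp: doubleton_eq_iff add.commute)
  moreover have "z \<noteq> - x" "w \<noteq> - x" "z \<noteq> - y" "w \<noteq> - y"
    using pair_sums_not_opposite[of x y z w] pair_sums_not_opposite[of x y w z]
      pair_sums_not_opposite[of y x z w] pair_sums_not_opposite[of y x w z]
      xy zw sum_nz by (simp_all add: add.commute)
  moreover have "x \<noteq> 0" "y \<noteq> 0" "z \<noteq> 0" "w \<noteq> 0"
    using xy zw zero_notin_directions by auto
  ultimately have "distinct [x, y, - z, - w, - x, - y, z, w]"
    using xy(3) zw(3) sum_nz by (auto simp: two_times_eq_0_iff minus_equation_iff equation_minus_iff)
  moreover have "x + y + - z + - w = 0" using sums by (simp add: algebra_simps)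
  moreover have "{x, y, - z, - w} \<subseteq> directions"
    using xy zw minus_in_directions by auto
  ultimately show False
    using zsf zero_sum_quadrupleI[of x y "- z" "- w"] by (simp only: minus_minus)
qed

lemma secant_of_pair:
  assumes "x \<in> directions" "y \<in> directions" "y \<noteq> x" "y \<noteq> - x"
  shows "a - (x + y) \<notin> D" "is_line {a - (x + y), a + x, a + y}"
proof -
  have "x + y \<noteq> 0" using assms(4) by (auto simp: eq_neg_iff_add_eq_0 add.commute)
  have distinct: "- (x + y) \<noteq> x" "- (x + y) \<noteq> y"
    using assms(3) minus_add_eq_left_iff[of x y] minus_add_eq_left_iff[of y x] by (auto simp: add.commute)
  show "a - (x + y) \<notin> D"
  proof
    assume "a - (x + y) \<in> D"
    then have "- (x + y) \<in> directions" unfolding directions_def by (metis diff_conv_add_uminus mem_Collect_eq)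
    then show False
      using no_zero_sum_triple[of x y "- (x + y)"] assms(1-3) distinct by auto
  qed
  have "is_line {a + - (x + y), a + x, a + y}"
    unfolding is_line_iff using assms(3) distinct by (auto simp: three_times_eq_0)
  then show "is_line {a - (x + y), a + x, a + y}" by (simp only: diff_conv_add_uminus)
qed

lemma two_secants:
  assumes "\<not> zero_sum_free 4 directions"
  shows "\<exists>b. b \<notin> D \<and> b \<noteq> a \<and> \<not> card (secants b) \<le> 1"
proof -
  obtain x y z w where dirs: "{x, y, z, w} \<subseteq> directions"
    and distinct: "distinct [x, y, z, w, -x, -y, -z, -w]" and sum: "x + y + z + w = 0"
    using assms by (rule zero_sum_quadrupleE)
  define b where "b = a - (x + y)"
  have b_eq: "b = a - (- z + - w)" unfolding b_def using sum by (simp add: algebra_simps eq_neg_iff_add_eq_0)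
  have L1: "b \<notin> D" "is_line {b, a + x, a + y}"
    unfolding b_def using secant_of_pair[of x y] dirs distinct by auto
  have L2: "is_line {b, a + - z, a + - w}"
    unfolding b_eq using secant_of_pair[of "- z" "- w"] dirs distinct minus_in_directions by auto
  have "b \<noteq> a" unfolding b_def using distinct by (auto simp: eq_neg_iff_add_eq_0 add.commute)
  define L1 where "L1 = {b, a + x, a + y}"
  define L2 where "L2 = {b, a + - z, a + - w}"
  have "a + x \<notin> L2"
    using L1(2) distinct unfolding L2_def by (auto simp: is_line_iff)
  then have "L1 \<noteq> L2" unfolding L1_def by blast
  moreover have "L1 \<in> secants b" "L2 \<in> secants b"
    using L1(2) L2 dirs minus_in_directions unfolding L1_def L2_def secants_def directions_def by auto
  then have "card {L1, L2} \<le> card (secants b)" by (intro card_mono) auto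
  ultimately have "\<not> card (secants b) \<le> 1" by simp
  then show ?thesis using L1(1) \<open>b \<noteq> a\<close> by blast
qed

lemma secant_condition_iff:
  "(\<forall>b. b \<notin> D \<and> b \<noteq> a \<longrightarrow> card (secants b) \<le> 1) \<longleftrightarrow> zero_sum_free 4 directions"
  using at_most_one_secant two_secants by blast

lemma cohyperplanar_quadruple:
  assumes "\<not> zero_sum_free 4 directions"
  shows "\<exists>Q\<subseteq>P. card Q = 4 \<and> cohyperplanar (\<Union>Q)"
proof -
  obtain x y z w where dirs: "{x, y, z, w} \<subseteq> directions"
    and distinct: "distinct [x, y, z, w, -x, -y, -z, -w]" and sum: "x + y + z + w = 0"
    using assms by (rule zero_sum_quadrupleE)
  define V where "V = f3_span {x, y, z}"
  have "f3_independent {x, y, z}"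
    using dirs distinct
    by (intro zero_sum_free_f3_independent[OF minus_in_directions zero_sum_free_3])
      (auto simp: antipodal_free_def card_insert_if)
  then have "card V = 3 ^ 3" unfolding V_def using distinct by (simp add: card_f3_span)
  moreover have V: "is_subspace V" unfolding V_def by (rule f3_span_subspace)
  ultimately have hyperplane: "is_hyperplane ((\<lambda>v. a + v) ` V)"
    unfolding is_hyperplane_def by blast
  have "x \<in> V" "y \<in> V" "z \<in> V" using f3_span_superset[of "{x, y, z}"] unfolding V_def by auto
  moreover from this have "- (x + y + z) \<in> V"
    using V subspace_minus[OF V] unfolding is_subspace_def by blast
  moreover have "w = - (x + y + z)"
    using sum by (metis add.commute eq_neg_iff_add_eq_0)
  ultimately have xyzw_V: "{x, y, z, w} \<subseteq> V" by simp
  define Q where "Q = (\<lambda>u. {a + u, a - u}) ` {x, y, z, w}"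
  have "Q \<subseteq> P" unfolding Q_def using dirs aline_in_P by auto
  moreover have "inj_on (\<lambda>u. {a + u, a - u}) {x, y, z, w}"
    using distinct by (auto intro!: inj_onI simp: aline_pair_eq_iff)
  then have "card Q = 4" unfolding Q_def using distinct by (simp add: card_image)
  moreover have "\<Union>Q \<subseteq> (\<lambda>v. a + v) ` V"
    unfolding Q_def using aline_subset_translate[OF V] xyzw_V by blast
  ultimately show ?thesis using hyperplane unfolding cohyperplanar_def by blast
qed

lemma not_cohyperplanar_quadruple:
  assumes zsf: "zero_sum_free 4 directions" and Q: "Q \<subseteq> P" "card Q = 4"
  shows "\<not> cohyperplanar (\<Union>Q)"
proof
  assume "cohyperplanar (\<Union>Q)"
  then obtain p V where V: "is_subspace V" "card V = 3 ^ 3" "\<Union>Q \<subseteq> (\<lambda>v. p + v) ` V"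
    unfolding cohyperplanar_def is_hyperplane_def by blast
  have "\<forall>l\<in>Q. \<exists>u. u \<in> directions \<and> l = {a + u, a - u}"
    using Q(1) by (blast elim: aline_directionE)
  from bchoice[OF this] obtain dir
    where dir: "\<forall>l\<in>Q. dir l \<in> directions \<and> l = {a + dir l, a - dir l}" ..
  define S where "S = dir ` Q"
  have "inj_on dir Q" using dir by (metis inj_onI)
  then have "card S = 4" unfolding S_def using Q(2) by (simp add: card_image)
  have "antipodal_free S"
    unfolding antipodal_free_def S_def
  proof clarify
    fix l m assume lm: "l \<in> Q" "m \<in> Q" "- dir l = dir m"
    then have "m = l" using dir lm(1,2) aline_pair_eq_iff by metis
    with lm(3) have "dir l = 0" by (simp add: minus_eq_self_iff)
    then show False using dir lm(1) zero_notin_directions by force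
  qed
  moreover have "S \<subseteq> directions" unfolding S_def using dir by blast
  ultimately have "f3_independent S"
    using \<open>card S = 4\<close> by (intro zero_sum_free_f3_independent[OF minus_in_directions zsf]) auto
  then have "card (f3_span S) = 3 ^ 4" using \<open>card S = 4\<close> by (simp add: card_f3_span)
  moreover have "S \<subseteq> V"
  proof
    fix u assume "u \<in> S"
    then obtain l where l: "l \<in> Q" "u = dir l" unfolding S_def by blast
    then have "l = {a + u, a - u}" using dir by blast
    moreover have "l \<subseteq> (\<lambda>v. p + v) ` V" using l(1) V(3) by blast
    ultimately have "a + u \<in> (\<lambda>v. p + v) ` V" "a - u \<in> (\<lambda>v. p + v) ` V" by simp_all
    then show "u \<in> V" by (rule direction_in_subspace[OF V(1)])
  qed
  then have "card (f3_span S) \<le> card V" using V(1) by (intro card_mono f3_span_subset) auto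
  ultimately show False using V(2) by simp
qed

lemma demicap_iff:
  assumes "card P = 5"
  shows "is_demicap a D \<longleftrightarrow> zero_sum_free 4 directions"
proof
  assume "is_demicap a D"
  then obtain P' where P': "\<forall>l\<in>P'. is_aline a l" "\<Union>P' = D"
    "\<forall>Q. Q \<subseteq> P' \<and> card Q = 4 \<longrightarrow> \<not> cohyperplanar (\<Union>Q)"
    unfolding is_demicap_def by blast
  have "P' = P"
    using alines_subset_if_Union_subset[of P' a P] alines_subset_if_Union_subset[of P a P']
      P'(1,2) alines D_eq by blast
  with P'(3) show "zero_sum_free 4 directions" using cohyperplanar_quadruple by blast
next
  assume "zero_sum_free 4 directions"
  then show "is_demicap a D"
    unfolding is_demicap_def using assms cap alines D_eq not_cohyperplanar_quadruple by blast
qed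

end

theorem lemma3p4:
  fixes a :: pt and P :: "pt set set" and D :: "pt set"
  assumes "card P = 5"
    and "\<forall>l\<in>P. is_aline a l"
    and "pairwise disjnt P"
    and "D = \<Union>P"
    and "is_cap D"
  shows "is_demicap a D \<longleftrightarrow>
    (\<forall>b. b \<notin> D \<and> b \<noteq> a \<longrightarrow> card {L. is_line L \<and> L \<subseteq> insert b D} \<le> 1)"
proof -
  interpret aline_union a P D
    using assms(2,4,5) by unfold_locales
  have "is_demicap a D \<longleftrightarrow> zero_sum_free 4 directions"
    using assms(1) by (rule demicap_iff)
  also have "\<dots> \<longleftrightarrow> (\<forall>b. b \<notin> D \<and> b \<noteq> a \<longrightarrow> card (secants b) \<le> 1)"
    using secant_condition_iff by simp
  finally show ?thesis unfolding secants_def .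
qed

end
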